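(* There is a neighborhood $U\subset\mathbb C_n$ of the image of $\gamma_0$ such that at every point of $U$ one has $\mathcal D_n+[\mathcal D_n,\mathcal D_n]=T\mathbb C_n$. That is, $\mathcal D_n$ is completely non-integrable on $U$ with growth vector $(n,2n-1)$; the vector fields $\xi_i$ together with their first commutators span the tangent spaces of $\mathbb C_n$.
   Context: Let $n\ge3$ and let $\mathcal P_n$ be the $2n$-dimensional manifold of convex $n$-gons in $\mathbb R^2$. A polygon is encoded by its side lines, cyclically ordered counterclockwise (indices mod $n$): $L_i=\{x\cos\alpha_i+y\sin\alpha_i=p_i\}$, with $(\cos\alpha_i,\sin\alpha_i)$ the outer unit normal. The coordinates are $(\alpha_i,p_i)$, with $0<\alpha_{i+1}-\alpha_i<\pi$ and total turning $2\pi$. Let $\mathcal D_n$ be the distribution spanned by the vector fields $\xi_i=\partial_{\alpha_i}+\Phi_i\,\partial_{p_i}$, $i=1,\dots,n$, where $$\Phi_i=\frac{\cos^2\!\big(\frac{\alpha_i-\alpha_{i-1}}2\big)(p_{i+1}+p_i)-\cos^2\!\big(\frac{\alpha_{i+1}-\alpha_i}2\big)(p_{i-1}+p_i)}{2\sin\!\big(\frac{\alpha_{i+1}-\alpha_{i-1}}2\big)\cos\!\big(\frac{\alpha_i-\alpha_{i-1}}2\big)\cos\!\big(\frac{\alpha_{i+1}-\alpha_i}2\big)}.$$ Geometrically, $\xi_i$ is the infinitesimal counterclockwise rotation of $L_i$ about the point $C_i$ where $L_i$ touches the circle tangent to $L_{i-1},L_i,L_{i+1}$. That circle lies on the polygon's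 side of $L_{i\pm1}$ and on the opposite side of $L_i$. $\mathcal D_n$ is tangent to the level sets of the perimeter $F$. Let $\mathbb C_n=\{F=2n\tan(\pi/n)\}$, a $(2n-1)$-dimensional submanifold of $\mathcal P_n$ carrying the $n$-dimensional distribution $\mathcal D_n$. Let $\gamma_0:[0,1]\to\mathbb C_n$ be the family of regular $n$-gons circumscribed about the unit circle centered at the origin: $\alpha_i(t)=\frac{2\pi}{n}(t+i-1)$, $p_i(t)=1$. *)

theory Defs
  imports "HOL-Analysis.Analysis"
begin

text \<open>A point of the coordinate space is a function x :: nat \<Rightarrow> real;
  for 0-based side index i < n, x i is the angle alpha_(i+1) and x (n+i) is p_(i+1).
  Values x k for k \<ge> 2n are ignored by every definition below.
  Side indices are cyclic mod n, and the angle lift satisfies alpha_(i+n) = alpha_i + 2 pi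
  (total turning 2 pi).\<close>

definition nxt :: "nat \<Rightarrow> nat \<Rightarrow> nat" where "nxt n i = (i + 1) mod n"
definition prv :: "nat \<Rightarrow> nat \<Rightarrow> nat" where "prv n i = (i + n - 1) mod n"

definition pc :: "nat \<Rightarrow> (nat \<Rightarrow> real) \<Rightarrow> nat \<Rightarrow> real" where
  "pc n x i = x (n + i)"

definition adiff :: "nat \<Rightarrow> (nat \<Rightarrow> real) \<Rightarrow> nat \<Rightarrow> real" where
  "adiff n x i = (if i + 1 < n then x (i + 1) - x i else x 0 + 2 * pi - x (n - 1))"

definition Phi :: "nat \<Rightarrow> (nat \<Rightarrow> real) \<Rightarrow> nat \<Rightarrow> real" where
  "Phi n x i =
    (let a = adiff n x (prv n i); b = adiff n x i in
      ((cos (a / 2))\<^sup>2 * (pc n x (nxt n i) + pc n x i)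
        - (cos (b / 2))\<^sup>2 * (pc n x (prv n i) + pc n x i))
      / (2 * sin ((a + b) / 2) * cos (a / 2) * cos (b / 2)))"

definition xi :: "nat \<Rightarrow> nat \<Rightarrow> (nat \<Rightarrow> real) \<Rightarrow> (nat \<Rightarrow> real)" where
  "xi n i x = (\<lambda>k. if k = i then 1 else if k = n + i then Phi n x i else 0)"

definition pd :: "((nat \<Rightarrow> real) \<Rightarrow> real) \<Rightarrow> (nat \<Rightarrow> real) \<Rightarrow> nat \<Rightarrow> real" where
  "pd f x j = deriv (\<lambda>t. f (x(j := x j + t))) 0"

definition lie :: "nat \<Rightarrow> ((nat \<Rightarrow> real) \<Rightarrow> (nat \<Rightarrow> real)) \<Rightarrow> ((nat \<Rightarrow> real) \<Rightarrow> (nat \<Rightarrow> real))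
    \<Rightarrow> (nat \<Rightarrow> real) \<Rightarrow> (nat \<Rightarrow> real)" where
  "lie n X Y x = (\<lambda>k. \<Sum>j<2 * n. X x j * pd (\<lambda>y. Y y k) x j - Y x j * pd (\<lambda>y. X y k) x j)"

text \<open>Vertex L_i \<inter> L_(i+1).\<close>
definition vertex :: "nat \<Rightarrow> (nat \<Rightarrow> real) \<Rightarrow> nat \<Rightarrow> real \<times> real" where
  "vertex n x i =
    (let a = x i; b = x (nxt n i); p = pc n x i; q = pc n x (nxt n i); s = sin (adiff n x i) in
      ((p * sin b - q * sin a) / s, (q * cos a - p * cos b) / s))"

text \<open>Signed length of side i (from vertex i-1 to vertex i along L_i, counterclockwise).\<close>
definition side_len :: "nat \<Rightarrow> (nat \<Rightarrow> real) \<Rightarrow> nat \<Rightarrow> real" where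
  "side_len n x i =
    (let u = vertex n x i; w = vertex n x (prv n i) in
      (fst u - fst w) * (- sin (x i)) + (snd u - snd w) * cos (x i))"

definition Pn :: "nat \<Rightarrow> (nat \<Rightarrow> real) set" where
  "Pn n = {x. (\<forall>i<n. 0 < adiff n x i \<and> adiff n x i < pi) \<and> (\<forall>i<n. 0 < side_len n x i)}"

definition perimeter :: "nat \<Rightarrow> (nat \<Rightarrow> real) \<Rightarrow> real" where
  "perimeter n x = (\<Sum>i<n. dist (vertex n x (prv n i)) (vertex n x i))"

definition Cn :: "nat \<Rightarrow> (nat \<Rightarrow> real) set" where
  "Cn n = {x \<in> Pn n. perimeter n x = 2 * real n * tan (pi / real n)}"

definition D_plus_bracket :: "nat \<Rightarrow> (nat \<Rightarrow> real) \<Rightarrow> (nat \<Rightarrow> real) set" where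
  "D_plus_bracket n x = {v. \<exists>c d. \<forall>k<2 * n.
      v k = (\<Sum>i<n. c i * xi n i x k) + (\<Sum>i<n. \<Sum>j<n. d i j * lie n (xi n i) (xi n j) x k)}"

definition tangent_Cn :: "nat \<Rightarrow> (nat \<Rightarrow> real) \<Rightarrow> (nat \<Rightarrow> real) set" where
  "tangent_Cn n x = {v. (\<Sum>j<2 * n. pd (perimeter n) x j * v j) = 0}"

text \<open>gamma_0(t): regular n-gons circumscribed about the unit circle.\<close>
definition gamma0 :: "nat \<Rightarrow> real \<Rightarrow> (nat \<Rightarrow> real)" where
  "gamma0 n t = (\<lambda>k. if k < n then 2 * pi / real n * (t + real k) else 1)"

end

theory Submission
  imports Defs
begin

text \<open>Write u_i = tan(theta_i/2), where theta_i is the exterior angle at vertex i. On P_n the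
  perimeter is the sum of the tangent lengths (p_i + p_(i+1)) u_i, and Phi_i is a rational
  function of u_(i-1), u_i, p_(i-1), p_i, p_(i+1). As xi_i moves only alpha_i and p_i, the
  bracket [xi_i, xi_j] is a combination of the p_i- and p_j-directions and vanishes unless
  i and j are neighbours. A direct computation shows that dF annihilates every xi_i and every
  bracket. Conversely, the xi_i produce the alpha-components of a tangent vector and the
  brackets [xi_i, xi_(i+1)] successively all p-components but the last, which is then fixed
  by dF. This works as long as the coefficients xi_(i+1) Phi_i do not vanish; at a regular
  n-gon they all equal (1 + tan^2(pi/n))/2, and every point of gamma_0 has the same
  coordinates u_i and p_i, which makes the neighbourhood uniform along gamma_0.\<close>

section \<open>Cyclic indices\<close>

lemma nxt_eq: "i < n \<Longrightarrow> nxt n i = (if i + 1 < n then i + 1 else 0)"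
  by (cases "i + 1 = n") (auto simp: nxt_def)

lemma prv_eq: "i < n \<Longrightarrow> prv n i = (if i = 0 then n - 1 else i - 1)"
  by (cases i) (auto simp: prv_def)

lemma nxt_less: "0 < n \<Longrightarrow> nxt n i < n"
  by (simp add: nxt_def)

lemma prv_less: "0 < n \<Longrightarrow> prv n i < n"
  by (simp add: prv_def)

lemma nxt_prv: "i < n \<Longrightarrow> nxt n (prv n i) = i"
  by (auto simp: nxt_eq prv_eq prv_less)

lemma prv_nxt: "i < n \<Longrightarrow> prv n (nxt n i) = i"
  by (auto simp: nxt_eq prv_eq nxt_less)

lemma nxt_neq: "3 \<le> n \<Longrightarrow> i < n \<Longrightarrow> nxt n i \<noteq> i"
  by (auto simp: nxt_eq)

lemma nxt_neq_prv: "3 \<le> n \<Longrightarrow> i < n \<Longrightarrow> nxt n i \<noteq> prv n i"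
  by (auto simp: prv_eq nxt_eq)

lemma eq_nxt_iff_prv_eq: "i < n \<Longrightarrow> j < n \<Longrightarrow> j = nxt n i \<longleftrightarrow> i = prv n j"
  by (auto simp: prv_eq nxt_eq)

lemma sum_of_bool_eq_nxt:
  assumes "m < n"
  shows "(\<Sum>i<n. of_bool (m = nxt n i) * (f i :: real)) = f (prv n m)"
proof -
  have "(\<Sum>i<n. of_bool (m = nxt n i) * f i) = (\<Sum>i<n. if i = prv n m then f i else 0)"
    using assms by (intro sum.cong) (auto simp: eq_nxt_iff_prv_eq)
  also have "\<dots> = f (prv n m)"
    using assms prv_less[of n m] by simp
  finally show ?thesis .
qed

lemma sum_reindex_nxt:
  assumes "0 < n"
  shows "(\<Sum>i<n. f (nxt n i)) = (\<Sum>i<n. (f i :: real))"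
proof (rule sum.reindex_bij_betw)
  show "bij_betw (nxt n) {..<n} {..<n}"
    by (rule bij_betw_byWitness[where f' = "prv n"])
      (use assms in \<open>auto simp: prv_nxt nxt_prv nxt_less prv_less\<close>)
qed

lemma adiff_fun_upd:
  assumes "i < n" "2 \<le> n"
  shows "adiff n (x(m := x m + t)) i = adiff n x i + t * (of_bool (m = nxt n i) - of_bool (m = i))"
  using assms by (auto simp: adiff_def nxt_eq algebra_simps)

lemma pc_fun_upd: "pc n (x(m := x m + t)) i = pc n x i + t * of_bool (m = n + i)"
  by (auto simp: pc_def)

definition tan_half_angle :: "nat \<Rightarrow> (nat \<Rightarrow> real) \<Rightarrow> nat \<Rightarrow> real" where
  "tan_half_angle n x i = tan (adiff n x i / 2)"

lemma Pn_adiff: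
  assumes "x \<in> Pn n" "i < n"
  shows "0 < adiff n x i" "adiff n x i < pi"
  using assms unfolding Pn_def by blast+

lemma Pn_sin_adiff_pos: "x \<in> Pn n \<Longrightarrow> i < n \<Longrightarrow> 0 < sin (adiff n x i)"
  using Pn_adiff by (blast intro: sin_gt_zero)

lemma Pn_cos_half_adiff_pos: "x \<in> Pn n \<Longrightarrow> i < n \<Longrightarrow> 0 < cos (adiff n x i / 2)"
  using Pn_adiff[of x n i] by (intro cos_gt_zero_pi) auto

lemma Pn_tan_half_angle_pos: "x \<in> Pn n \<Longrightarrow> i < n \<Longrightarrow> 0 < tan_half_angle n x i"
  unfolding tan_half_angle_def using Pn_adiff[of x n i] by (intro tan_gt_zero) auto

lemma tan_half_eq: "tan ((b::real) / 2) = (1 - cos b) / sin b"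
proof (cases "sin b = 0")
  case True
  then have "cos b = 1 \<or> cos b = -1"
    using sin_cos_squared_add[of b] by (auto simp: power2_eq_1_iff)
  then show ?thesis
    using tan_half[of "b / 2"] True by auto
next
  case False
  then have "cos b + 1 \<noteq> 0"
    using sin_cos_squared_add[of b] by (auto simp: add_eq_0_iff power2_eq_square)
  have "tan (b / 2) = sin b / (cos b + 1)"
    using tan_half[of "b / 2"] by simp
  also have "\<dots> = (1 - cos b) / sin b"
    using False \<open>cos b + 1 \<noteq> 0\<close> sin_squared_eq[of b]
    by (simp add: field_simps power2_eq_square)
  finally show ?thesis .
qed

lemma inverse_cos_sq: "cos y \<noteq> 0 \<Longrightarrow> inverse ((cos y)\<^sup>2) = 1 + (tan y)\<^sup>2"
  by (simp add: tan_sec power_inverse)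

section \<open>The perimeter as a sum of tangent lengths\<close>

lemma adiff_cases:
  assumes "i < n" "2 \<le> n"
  shows "adiff n x i = x (nxt n i) - x i \<or> adiff n x i = x (nxt n i) - x i + 2 * pi"
proof (cases "i + 1 < n")
  case False
  then have "i = n - 1" using assms(1) by simp
  then show ?thesis using assms False by (simp add: adiff_def nxt_eq)
qed (simp add: adiff_def nxt_eq)

lemma sin_adiff: "i < n \<Longrightarrow> 2 \<le> n \<Longrightarrow> sin (adiff n x i) = sin (x (nxt n i) - x i)"
  using adiff_cases[of i n x] by auto

lemma cos_adiff: "i < n \<Longrightarrow> 2 \<le> n \<Longrightarrow> cos (adiff n x i) = cos (x (nxt n i) - x i)"
  using adiff_cases[of i n x] by auto

text \<open>The intersection of the lines with outer normals at angles a, b and support numbers p, q.\<close>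

definition line_meet :: "real \<Rightarrow> real \<Rightarrow> real \<Rightarrow> real \<Rightarrow> real \<times> real" where
  "line_meet a b p q = ((p * sin b - q * sin a) / sin (b - a), (q * cos a - p * cos b) / sin (b - a))"

lemma line_meet_on_fst:
  assumes "sin (b - a) \<noteq> 0"
  shows "fst (line_meet a b p q) * cos a + snd (line_meet a b p q) * sin a = p"
proof -
  have "(p * sin b - q * sin a) * cos a + (q * cos a - p * cos b) * sin a = p * sin (b - a)"
    by (simp add: sin_diff algebra_simps)
  then show ?thesis
    using assms unfolding line_meet_def fst_conv snd_conv times_divide_eq_left
      add_divide_distrib[symmetric] by simp
qed

lemma line_meet_on_snd:
  assumes "sin (b - a) \<noteq> 0"
  shows "fst (line_meet a b p q) * cos b + snd (line_meet a b p q) * sin b = q"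
proof -
  have "(p * sin b - q * sin a) * cos b + (q * cos a - p * cos b) * sin b = q * sin (b - a)"
    by (simp add: sin_diff algebra_simps)
  then show ?thesis
    using assms unfolding line_meet_def fst_conv snd_conv times_divide_eq_left
      add_divide_distrib[symmetric] by simp
qed

lemma line_meet_along_fst:
  "fst (line_meet a b p q) * - sin a + snd (line_meet a b p q) * cos a = (q - p * cos (b - a)) / sin (b - a)"
proof -
  have "(p * sin b - q * sin a) * - sin a + (q * cos a - p * cos b) * cos a = q - p * cos (b - a)"
    using sin_cos_squared_add[of a] unfolding cos_diff by algebra
  then show ?thesis
    unfolding line_meet_def fst_conv snd_conv times_divide_eq_left add_divide_distrib[symmetric]
    by simp
qed

lemma line_meet_along_snd:
  "fst (line_meet a b p q) * - sin b + snd (line_meet a b p q) * cos b = (q * cos (b - a) - p) / sin (b - a)"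
proof -
  have "(p * sin b - q * sin a) * - sin b + (q * cos a - p * cos b) * cos b = q * cos (b - a) - p"
    using sin_cos_squared_add[of b] unfolding cos_diff by algebra
  then show ?thesis
    unfolding line_meet_def fst_conv snd_conv times_divide_eq_left add_divide_distrib[symmetric]
    by simp
qed

lemma vertex_eq_line_meet:
  "i < n \<Longrightarrow> 2 \<le> n \<Longrightarrow> vertex n x i = line_meet (x i) (x (nxt n i)) (pc n x i) (pc n x (nxt n i))"
  by (simp add: vertex_def line_meet_def Let_def sin_adiff)

lemma side_len_eq:
  assumes "i < n" "3 \<le> n"
  shows "side_len n x i = (pc n x (nxt n i) - pc n x i * cos (adiff n x i)) / sin (adiff n x i)
     + (pc n x (prv n i) - pc n x i * cos (adiff n x (prv n i))) / sin (adiff n x (prv n i))"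
proof -
  have p: "prv n i < n" and np: "nxt n (prv n i) = i"
    using assms by (simp_all add: prv_less nxt_prv)
  let ?Vi = "line_meet (x i) (x (nxt n i)) (pc n x i) (pc n x (nxt n i))"
  let ?Vp = "line_meet (x (prv n i)) (x i) (pc n x (prv n i)) (pc n x i)"
  have "side_len n x i = (fst ?Vi * - sin (x i) + snd ?Vi * cos (x i))
      - (fst ?Vp * - sin (x i) + snd ?Vp * cos (x i))"
    using assms p by (simp add: side_len_def Let_def vertex_eq_line_meet np algebra_simps)
  also have "\<dots> = (pc n x (nxt n i) - pc n x i * cos (x (nxt n i) - x i)) / sin (x (nxt n i) - x i)
      - (pc n x i * cos (x i - x (prv n i)) - pc n x (prv n i)) / sin (x i - x (prv n i))"
    unfolding line_meet_along_fst line_meet_along_snd ..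
  finally show ?thesis
    using assms p by (simp add: sin_adiff cos_adiff np diff_divide_distrib)
qed

lemma dist_along_line:
  fixes u1 u2 v1 v2 :: real
  assumes "(u1 - v1) * cos a + (u2 - v2) * sin a = 0"
  shows "dist (v1, v2) (u1, u2) = \<bar>(u1 - v1) * - sin a + (u2 - v2) * cos a\<bar>"
proof -
  have "(u1 - v1)\<^sup>2 + (u2 - v2)\<^sup>2
      = ((u1 - v1) * cos a + (u2 - v2) * sin a)\<^sup>2 + ((u1 - v1) * - sin a + (u2 - v2) * cos a)\<^sup>2"
    using sin_cos_squared_add[of a] by algebra
  then show ?thesis
    using assms by (simp add: dist_Pair_Pair dist_real_def power2_commute)
qed

lemma dist_vertex_prv:
  assumes "i < n" "3 \<le> n" "sin (adiff n x i) \<noteq> 0" "sin (adiff n x (prv n i)) \<noteq> 0"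
  shows "dist (vertex n x (prv n i)) (vertex n x i) = \<bar>side_len n x i\<bar>"
proof -
  have "prv n i < n" "nxt n (prv n i) = i"
    using assms by (simp_all add: prv_less nxt_prv)
  then have "(fst (vertex n x i) - fst (vertex n x (prv n i))) * cos (x i)
      + (snd (vertex n x i) - snd (vertex n x (prv n i))) * sin (x i) = 0"
    using assms line_meet_on_fst[of "x (nxt n i)" "x i"] line_meet_on_snd[of "x i" "x (prv n i)"]
    by (simp add: vertex_eq_line_meet sin_adiff algebra_simps)
  from dist_along_line[OF this] show ?thesis
    by (simp add: side_len_def Let_def)
qed

definition tangent_perimeter :: "nat \<Rightarrow> (nat \<Rightarrow> real) \<Rightarrow> real" where
  "tangent_perimeter n x = (\<Sum>i<n. (pc n x i + pc n x (nxt n i)) * tan_half_angle n x i)"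

text \<open>The foot of the perpendicular from the origin splits each side in two; the two pieces
  meeting at vertex i add up to (p_i + p_(i+1)) tan(theta_i/2).\<close>

lemma sum_side_len:
  assumes "3 \<le> n"
  shows "(\<Sum>i<n. side_len n x i) = tangent_perimeter n x"
proof -
  let ?A = "\<lambda>i. (pc n x (nxt n i) - pc n x i * cos (adiff n x i)) / sin (adiff n x i)"
  let ?B = "\<lambda>i. (pc n x i - pc n x (nxt n i) * cos (adiff n x i)) / sin (adiff n x i)"
  have "(\<Sum>i<n. side_len n x i) = (\<Sum>i<n. ?A i) + (\<Sum>i<n. ?B (prv n i))"
    using assms by (simp add: side_len_eq sum.distrib nxt_prv)
  also have "(\<Sum>i<n. ?B (prv n i)) = (\<Sum>i<n. ?B i)"
    using sum_reindex_nxt[of n "\<lambda>i. ?B (prv n i)"] assms by (simp add: prv_nxt)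
  also have "(\<Sum>i<n. ?A i) + (\<Sum>i<n. ?B i) = tangent_perimeter n x"
    unfolding tangent_perimeter_def tan_half_angle_def tan_half_eq sum.distrib[symmetric]
    by (intro sum.cong) (simp_all add: field_split_simps right_diff_distrib)
  finally show ?thesis .
qed

lemma perimeter_eq_tangent_perimeter:
  assumes "3 \<le> n" "x \<in> Pn n"
  shows "perimeter n x = tangent_perimeter n x"
proof -
  have sin_nz: "sin (adiff n x j) \<noteq> 0" if "j < n" for j
    using Pn_sin_adiff_pos[OF assms(2) that] by simp
  have "dist (vertex n x (prv n i)) (vertex n x i) = side_len n x i" if "i < n" for i
  proof -
    have "dist (vertex n x (prv n i)) (vertex n x i) = \<bar>side_len n x i\<bar>"
      using that assms prv_less[of n i] by (intro dist_vertex_prv sin_nz) auto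
    moreover have "0 < side_len n x i"
      using that assms(2) by (simp add: Pn_def)
    ultimately show ?thesis by simp
  qed
  then show ?thesis
    unfolding perimeter_def sum_side_len[OF assms(1), symmetric] by simp
qed

section \<open>The coefficients Phi in half-angle tangents\<close>

definition phi_angle :: "real \<Rightarrow> real \<Rightarrow> real \<Rightarrow> real \<Rightarrow> real \<Rightarrow> real" where
  "phi_angle a b pn pm pp =
    ((cos (a / 2))\<^sup>2 * (pn + pm) - (cos (b / 2))\<^sup>2 * (pp + pm))
      / (2 * sin ((a + b) / 2) * cos (a / 2) * cos (b / 2))"

lemma Phi_eq_phi_angle:
  "Phi n x i = phi_angle (adiff n x (prv n i)) (adiff n x i) (pc n x (nxt n i)) (pc n x i) (pc n x (prv n i))"
  by (simp add: Phi_def phi_angle_def Let_def)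

definition phi_tan :: "real \<Rightarrow> real \<Rightarrow> real \<Rightarrow> real \<Rightarrow> real \<Rightarrow> real" where
  "phi_tan u v pn pm pp = ((pn + pm) * (1 + v\<^sup>2) - (pp + pm) * (1 + u\<^sup>2)) / (2 * (u + v))"

lemma phi_angle_eq_phi_tan:
  assumes "cos (a / 2) \<noteq> 0" "cos (b / 2) \<noteq> 0"
  shows "phi_angle a b pn pm pp = phi_tan (tan (a / 2)) (tan (b / 2)) pn pm pp"
proof -
  define sa ca sb cb where "sa = sin (a / 2)" and "ca = cos (a / 2)"
    and "sb = sin (b / 2)" and "cb = cos (b / 2)"
  define S where "S = sa * cb + ca * sb"
  have ca: "ca \<noteq> 0" and cb: "cb \<noteq> 0"
    using assms by (simp_all add: ca_def cb_def)
  have S_eq: "sin ((a + b) / 2) = S"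
    using sin_add[of "a / 2" "b / 2"] by (simp add: S_def sa_def ca_def sb_def cb_def add_divide_distrib)
  have "1 + (sa / ca)\<^sup>2 = 1 / ca\<^sup>2" "1 + (sb / cb)\<^sup>2 = 1 / cb\<^sup>2"
    using ca cb sin_cos_squared_add[of "a / 2"] sin_cos_squared_add[of "b / 2"]
    by (simp_all add: sa_def ca_def sb_def cb_def field_simps)
  moreover have "sa / ca + sb / cb = S / (ca * cb)"
    using ca cb by (simp add: field_simps S_def)
  ultimately have "phi_tan (sa / ca) (sb / cb) pn pm pp
      = ((pn + pm) * (1 / cb\<^sup>2) - (pp + pm) * (1 / ca\<^sup>2)) / (2 * (S / (ca * cb)))"
    by (simp only: phi_tan_def)
  also have "\<dots> = (ca\<^sup>2 * (pn + pm) - cb\<^sup>2 * (pp + pm)) / (2 * S * ca * cb)"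
  proof (cases "S = 0")
    case False
    have "(pn + pm) * (1 / cb\<^sup>2) - (pp + pm) * (1 / ca\<^sup>2)
        = (ca\<^sup>2 * (pn + pm) - cb\<^sup>2 * (pp + pm)) / (ca\<^sup>2 * cb\<^sup>2)"
      using ca cb by (simp add: field_simps)
    then show ?thesis
      using ca cb False by (simp add: field_simps power2_eq_square)
  qed simp
  finally show ?thesis
    by (simp add: phi_angle_def S_eq tan_def sa_def ca_def sb_def cb_def)
qed

definition phi_tan_du :: "real \<Rightarrow> real \<Rightarrow> real \<Rightarrow> real \<Rightarrow> real \<Rightarrow> real" where
  "phi_tan_du u v pn pm pp =
    (- (pp + pm) * (2 * u) * (2 * (u + v)) - ((pn + pm) * (1 + v\<^sup>2) - (pp + pm) * (1 + u\<^sup>2)) * 2)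
      / (2 * (u + v))\<^sup>2"

definition phi_tan_dv :: "real \<Rightarrow> real \<Rightarrow> real \<Rightarrow> real \<Rightarrow> real \<Rightarrow> real" where
  "phi_tan_dv u v pn pm pp =
    ((pn + pm) * (2 * v) * (2 * (u + v)) - ((pn + pm) * (1 + v\<^sup>2) - (pp + pm) * (1 + u\<^sup>2)) * 2)
      / (2 * (u + v))\<^sup>2"

definition phi_tan_dpn :: "real \<Rightarrow> real \<Rightarrow> real" where
  "phi_tan_dpn u v = (1 + v\<^sup>2) / (2 * (u + v))"

definition phi_tan_dpm :: "real \<Rightarrow> real \<Rightarrow> real" where
  "phi_tan_dpm u v = (v\<^sup>2 - u\<^sup>2) / (2 * (u + v))"

definition phi_tan_dpp :: "real \<Rightarrow> real \<Rightarrow> real" where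
  "phi_tan_dpp u v = - (1 + u\<^sup>2) / (2 * (u + v))"

lemma phi_tan_deriv:
  assumes "(fa has_real_derivative da) (at 0)" "(fb has_real_derivative db) (at 0)" "fa 0 + fb 0 \<noteq> 0"
  shows "((\<lambda>t. phi_tan (fa t) (fb t) (pn + kn * t) (pm + km * t) (pp + kp * t)) has_real_derivative
      da * phi_tan_du (fa 0) (fb 0) pn pm pp + db * phi_tan_dv (fa 0) (fb 0) pn pm pp
      + kn * phi_tan_dpn (fa 0) (fb 0) + km * phi_tan_dpm (fa 0) (fb 0) + kp * phi_tan_dpp (fa 0) (fb 0)) (at 0)"
  unfolding phi_tan_def
proof (rule DERIV_divide[THEN DERIV_cong])
  let ?u = "fa 0" and ?v = "fb 0"
  show "((\<lambda>t. (pn + kn * t + (pm + km * t)) * (1 + (fb t)\<^sup>2) - (pp + kp * t + (pm + km * t)) * (1 + (fa t)\<^sup>2))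
      has_real_derivative (kn + km) * (1 + ?v\<^sup>2) + (pn + pm) * (2 * ?v * db)
        - ((kp + km) * (1 + ?u\<^sup>2) + (pp + pm) * (2 * ?u * da))) (at 0)"
    by (auto intro!: derivative_eq_intros assms simp: algebra_simps)
  show "((\<lambda>t. 2 * (fa t + fb t)) has_real_derivative 2 * (da + db)) (at 0)"
    by (auto intro!: derivative_eq_intros assms)
  show "2 * (?u + ?v) \<noteq> 0"
    using assms(3) by simp
  show "(((kn + km) * (1 + ?v\<^sup>2) + (pn + pm) * (2 * ?v * db) - ((kp + km) * (1 + ?u\<^sup>2) + (pp + pm) * (2 * ?u * da)))
      * (2 * (?u + ?v)) - ((pn + kn * 0 + (pm + km * 0)) * (1 + ?v\<^sup>2) - (pp + kp * 0 + (pm + km * 0)) * (1 + ?u\<^sup>2))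
      * (2 * (da + db))) / (2 * (?u + ?v) * (2 * (?u + ?v)))
    = da * phi_tan_du ?u ?v pn pm pp + db * phi_tan_dv ?u ?v pn pm pp
      + kn * phi_tan_dpn ?u ?v + km * phi_tan_dpm ?u ?v + kp * phi_tan_dpp ?u ?v"
    using assms(3) unfolding phi_tan_du_def phi_tan_dv_def phi_tan_dpn_def phi_tan_dpm_def phi_tan_dpp_def
    by (simp add: divide_simps) algebra
qed

lemma tan_half_line_deriv:
  assumes "cos (a / 2) \<noteq> 0"
  shows "((\<lambda>t. tan ((a + k * t) / 2)) has_real_derivative (1 + (tan (a / 2))\<^sup>2) * (k / 2)) (at 0)"
proof (rule DERIV_chain2[where f = tan])
  show "DERIV tan ((a + k * 0) / 2) :> 1 + (tan (a / 2))\<^sup>2"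
    using assms DERIV_tan[of "a / 2"] by (simp add: inverse_cos_sq)
  show "((\<lambda>t. (a + k * t) / 2) has_real_derivative k / 2) (at 0)"
    by (auto intro!: derivative_eq_intros)
qed

lemma eventually_cos_half_line_neq:
  fixes a k :: real
  assumes "cos (a / 2) \<noteq> 0"
  shows "eventually (\<lambda>t. cos ((a + k * t) / 2) \<noteq> 0) (nhds 0)"
proof -
  have "isCont (\<lambda>t. cos ((a + k * t) / 2)) 0"
    by (intro continuous_intros) simp
  then have "((\<lambda>t. cos ((a + k * t) / 2)) \<longlongrightarrow> cos ((a + k * 0) / 2)) (nhds 0)"
    unfolding isCont_def by (rule tendsto_at_iff_tendsto_nhds[THEN iffD1])
  then show ?thesis
    by (rule tendsto_imp_eventually_ne) (use assms in simp)
qed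

lemma phi_angle_deriv:
  assumes "cos (a / 2) \<noteq> 0" "cos (b / 2) \<noteq> 0" "tan (a / 2) + tan (b / 2) \<noteq> 0"
  shows "((\<lambda>t. phi_angle (a + ka * t) (b + kb * t) (pn + kn * t) (pm + km * t) (pp + kp * t))
    has_real_derivative
      (1 + (tan (a / 2))\<^sup>2) * (ka / 2) * phi_tan_du (tan (a / 2)) (tan (b / 2)) pn pm pp
    + (1 + (tan (b / 2))\<^sup>2) * (kb / 2) * phi_tan_dv (tan (a / 2)) (tan (b / 2)) pn pm pp
    + kn * phi_tan_dpn (tan (a / 2)) (tan (b / 2)) + km * phi_tan_dpm (tan (a / 2)) (tan (b / 2))
    + kp * phi_tan_dpp (tan (a / 2)) (tan (b / 2))) (at 0)"
proof -
  have "eventually (\<lambda>t. phi_angle (a + ka * t) (b + kb * t) (pn + kn * t) (pm + km * t) (pp + kp * t)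
      = phi_tan (tan ((a + ka * t) / 2)) (tan ((b + kb * t) / 2)) (pn + kn * t) (pm + km * t) (pp + kp * t))
    (nhds 0)"
    using eventually_cos_half_line_neq[OF assms(1), of ka] eventually_cos_half_line_neq[OF assms(2), of kb]
    by eventually_elim (rule phi_angle_eq_phi_tan)
  moreover have "((\<lambda>t. phi_tan (tan ((a + ka * t) / 2)) (tan ((b + kb * t) / 2))
      (pn + kn * t) (pm + km * t) (pp + kp * t)) has_real_derivative
      (1 + (tan (a / 2))\<^sup>2) * (ka / 2) * phi_tan_du (tan (a / 2)) (tan (b / 2)) pn pm pp
    + (1 + (tan (b / 2))\<^sup>2) * (kb / 2) * phi_tan_dv (tan (a / 2)) (tan (b / 2)) pn pm pp
    + kn * phi_tan_dpn (tan (a / 2)) (tan (b / 2)) + km * phi_tan_dpm (tan (a / 2)) (tan (b / 2))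
    + kp * phi_tan_dpp (tan (a / 2)) (tan (b / 2))) (at 0)"
    using phi_tan_deriv[OF tan_half_line_deriv[OF assms(1)] tan_half_line_deriv[OF assms(2)]] assms(3)
    by simp
  ultimately show ?thesis
    by (subst DERIV_cong_ev[OF refl _ refl])
qed

lemma Phi_eq_phi_tan:
  assumes "3 \<le> n" "x \<in> Pn n" "i < n"
  shows "Phi n x i = phi_tan (tan_half_angle n x (prv n i)) (tan_half_angle n x i)
    (pc n x (nxt n i)) (pc n x i) (pc n x (prv n i))"
  using assms prv_less[of n i]
  by (simp add: Phi_eq_phi_angle tan_half_angle_def phi_angle_eq_phi_tan Pn_cos_half_adiff_pos
      less_imp_neq[symmetric])

lemma pd_Phi:
  assumes "3 \<le> n" "x \<in> Pn n" "j < n"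
  shows "pd (\<lambda>y. Phi n y j) x m =
      (1 + (tan_half_angle n x (prv n j))\<^sup>2) * ((of_bool (m = j) - of_bool (m = prv n j)) / 2)
        * phi_tan_du (tan_half_angle n x (prv n j)) (tan_half_angle n x j)
            (pc n x (nxt n j)) (pc n x j) (pc n x (prv n j))
    + (1 + (tan_half_angle n x j)\<^sup>2) * ((of_bool (m = nxt n j) - of_bool (m = j)) / 2)
        * phi_tan_dv (tan_half_angle n x (prv n j)) (tan_half_angle n x j)
            (pc n x (nxt n j)) (pc n x j) (pc n x (prv n j))
    + of_bool (m = n + nxt n j) * phi_tan_dpn (tan_half_angle n x (prv n j)) (tan_half_angle n x j)
    + of_bool (m = n + j) * phi_tan_dpm (tan_half_angle n x (prv n j)) (tan_half_angle n x j)
    + of_bool (m = n + prv n j) * phi_tan_dpp (tan_half_angle n x (prv n j)) (tan_half_angle n x j)"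
proof -
  have p: "prv n j < n" and np: "nxt n (prv n j) = j" and n2: "2 \<le> n"
    using assms by (simp_all add: prv_less nxt_prv)
  have pos: "0 < cos (adiff n x (prv n j) / 2)" "0 < cos (adiff n x j / 2)"
    "0 < tan (adiff n x (prv n j) / 2) + tan (adiff n x j / 2)"
    using Pn_cos_half_adiff_pos[OF assms(2)] Pn_tan_half_angle_pos[OF assms(2)] p assms(3)
    by (simp_all add: tan_half_angle_def add_pos_pos)
  have line: "(\<lambda>t. Phi n (x(m := x m + t)) j) = (\<lambda>t. phi_angle
      (adiff n x (prv n j) + (of_bool (m = j) - of_bool (m = prv n j)) * t)
      (adiff n x j + (of_bool (m = nxt n j) - of_bool (m = j)) * t)
      (pc n x (nxt n j) + of_bool (m = n + nxt n j) * t)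
      (pc n x j + of_bool (m = n + j) * t)
      (pc n x (prv n j) + of_bool (m = n + prv n j) * t))"
    unfolding Phi_eq_phi_angle adiff_fun_upd[OF p n2] adiff_fun_upd[OF assms(3) n2] pc_fun_upd np
    by (simp add: algebra_simps)
  show ?thesis
    unfolding pd_def line tan_half_angle_def
    by (intro DERIV_imp_deriv phi_angle_deriv) (use pos in linarith)+
qed

section \<open>The differential of the perimeter\<close>

definition dperimeter :: "nat \<Rightarrow> (nat \<Rightarrow> real) \<Rightarrow> nat \<Rightarrow> real" where
  "dperimeter n x m = (\<Sum>i<n. (of_bool (m = n + i) + of_bool (m = n + nxt n i)) * tan_half_angle n x i
      + (pc n x i + pc n x (nxt n i))
          * ((1 + (tan_half_angle n x i)\<^sup>2) * ((of_bool (m = nxt n i) - of_bool (m = i)) / 2)))"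

lemma tangent_length_line_deriv:
  assumes "cos (B / 2) \<noteq> 0"
  shows "((\<lambda>t. ((P + k1 * t) + (Q + k2 * t)) * tan ((B + e * t) / 2)) has_real_derivative
      (k1 + k2) * tan (B / 2) + (P + Q) * ((1 + (tan (B / 2))\<^sup>2) * (e / 2))) (at 0)"
proof -
  have "((\<lambda>t. (P + k1 * t) + (Q + k2 * t)) has_real_derivative k1 + k2) (at 0)"
    by (auto intro!: derivative_eq_intros)
  from DERIV_mult[OF this tan_half_line_deriv[OF assms]] show ?thesis
    by (rule DERIV_cong) (simp add: algebra_simps)
qed

lemma tangent_perimeter_deriv:
  assumes "3 \<le> n" "\<And>i. i < n \<Longrightarrow> cos (adiff n x i / 2) \<noteq> 0"
  shows "((\<lambda>t. tangent_perimeter n (x(m := x m + t))) has_real_derivative dperimeter n x m) (at 0)"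
proof -
  have n2: "2 \<le> n" using assms by simp
  have "(\<lambda>t. tangent_perimeter n (x(m := x m + t))) = (\<lambda>t. \<Sum>i<n.
      ((pc n x i + of_bool (m = n + i) * t) + (pc n x (nxt n i) + of_bool (m = n + nxt n i) * t))
        * tan ((adiff n x i + (of_bool (m = nxt n i) - of_bool (m = i)) * t) / 2))"
    unfolding tangent_perimeter_def tan_half_angle_def
    by (intro ext sum.cong refl)
      (simp only: lessThan_iff adiff_fun_upd[OF _ n2] pc_fun_upd, simp add: algebra_simps)
  moreover have "((\<lambda>t. \<Sum>i<n.
      ((pc n x i + of_bool (m = n + i) * t) + (pc n x (nxt n i) + of_bool (m = n + nxt n i) * t))
        * tan ((adiff n x i + (of_bool (m = nxt n i) - of_bool (m = i)) * t) / 2))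
      has_real_derivative dperimeter n x m) (at 0)"
    unfolding dperimeter_def tan_half_angle_def
    by (rule DERIV_sum, rule tangent_length_line_deriv) (use assms(2) in simp)
  ultimately show ?thesis
    by simp
qed

lemma isCont_side_len_fun_upd:
  assumes "3 \<le> n" "i < n" "sin (adiff n x i) \<noteq> 0" "sin (adiff n x (prv n i)) \<noteq> 0"
  shows "isCont (\<lambda>t. side_len n (x(m := x m + t)) i) 0"
proof -
  have n2: "2 \<le> n" and p: "prv n i < n"
    using assms by (simp_all add: prv_less)
  show ?thesis
    using assms(3,4)
    by (simp only: side_len_eq[OF assms(2,1)] adiff_fun_upd[OF assms(2) n2] adiff_fun_upd[OF p n2]
        pc_fun_upd) (intro continuous_intros; simp)
qed

lemma isCont_eventually_nhds:
  assumes "isCont f a" "open S" "f a \<in> S"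
  shows "eventually (\<lambda>t. f t \<in> S) (nhds a)"
  using assms unfolding continuous_at_open eventually_nhds by blast

lemma eventually_fun_upd_in_Pn:
  assumes "3 \<le> n" "x \<in> Pn n"
  shows "eventually (\<lambda>t. x(m := x m + t) \<in> Pn n) (nhds 0)"
proof -
  have n2: "2 \<le> n" using assms(1) by simp
  have sin_nz: "sin (adiff n x j) \<noteq> 0" if "j < n" for j
    using Pn_sin_adiff_pos[OF assms(2) that] by simp
  have "eventually (\<lambda>t. adiff n (x(m := x m + t)) i \<in> {0<..<pi}
      \<and> side_len n (x(m := x m + t)) i \<in> {0<..}) (nhds 0)" if i: "i < n" for i
  proof -
    have "isCont (\<lambda>t. adiff n (x(m := x m + t)) i) 0"
      unfolding adiff_fun_upd[OF i n2] by (intro continuous_intros)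
    moreover have "isCont (\<lambda>t. side_len n (x(m := x m + t)) i) 0"
      using assms(1) i prv_less[of n i] by (intro isCont_side_len_fun_upd sin_nz) simp_all
    ultimately show ?thesis
      using assms(2) i by (intro eventually_conj isCont_eventually_nhds) (auto simp: Pn_def)
  qed
  then have "eventually (\<lambda>t. \<forall>i\<in>{..<n}. adiff n (x(m := x m + t)) i \<in> {0<..<pi}
      \<and> side_len n (x(m := x m + t)) i \<in> {0<..}) (nhds 0)"
    by (intro eventually_ball_finite) auto
  then show ?thesis
    by (rule eventually_mono) (auto simp: Pn_def)
qed

lemma pd_perimeter:
  assumes "3 \<le> n" "x \<in> Pn n"
  shows "pd (perimeter n) x m = dperimeter n x m"
proof -
  have "eventually (\<lambda>t. perimeter n (x(m := x m + t)) = tangent_perimeter n (x(m := x m + t))) (nhds 0)"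
    using eventually_fun_upd_in_Pn[OF assms]
    by (rule eventually_mono) (rule perimeter_eq_tangent_perimeter[OF assms(1)])
  moreover have "((\<lambda>t. tangent_perimeter n (x(m := x m + t))) has_real_derivative dperimeter n x m) (at 0)"
    using assms Pn_cos_half_adiff_pos[OF assms(2)]
    by (intro tangent_perimeter_deriv less_imp_neq[symmetric]) auto
  ultimately have "((\<lambda>t. perimeter n (x(m := x m + t))) has_real_derivative dperimeter n x m) (at 0)"
    by (subst DERIV_cong_ev[OF refl _ refl])
  then show ?thesis
    unfolding pd_def by (rule DERIV_imp_deriv)
qed

lemma dperimeter_alpha:
  assumes "3 \<le> n" "m < n"
  shows "dperimeter n x m = (pc n x (prv n m) + pc n x m) * (1 + (tan_half_angle n x (prv n m))\<^sup>2) / 2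
      - (pc n x m + pc n x (nxt n m)) * (1 + (tan_half_angle n x m)\<^sup>2) / 2"
proof -
  let ?f = "\<lambda>i. (pc n x i + pc n x (nxt n i)) * (1 + (tan_half_angle n x i)\<^sup>2) / 2"
  have "dperimeter n x m = (\<Sum>i<n. of_bool (m = nxt n i) * ?f i) - (\<Sum>i<n. if i = m then ?f i else 0)"
    unfolding dperimeter_def sum_subtractf[symmetric] using assms(2)
    by (intro sum.cong) (auto simp: field_simps)
  also have "\<dots> = ?f (prv n m) - ?f m"
    unfolding sum_of_bool_eq_nxt[OF assms(2)] using assms(2) by simp
  finally show ?thesis
    using assms by (simp add: nxt_prv)
qed

lemma dperimeter_p:
  assumes "3 \<le> n" "k < n"
  shows "dperimeter n x (n + k) = tan_half_angle n x k + tan_half_angle n x (prv n k)"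
proof -
  have "n + k \<noteq> nxt n i" "n + k \<noteq> i" if "i < n" for i
    using that nxt_less[of n i] by auto
  then have "dperimeter n x (n + k)
      = (\<Sum>i<n. if i = k then tan_half_angle n x i else 0)
        + (\<Sum>i<n. of_bool (k = nxt n i) * tan_half_angle n x i)"
    unfolding dperimeter_def sum.distrib[symmetric] by (intro sum.cong) (simp_all add: distrib_right)
  also have "\<dots> = tan_half_angle n x k + tan_half_angle n x (prv n k)"
    unfolding sum_of_bool_eq_nxt[OF assms(2)] using assms(2) by simp
  finally show ?thesis .
qed

section \<open>Lie brackets of the fields xi\<close>

lemma sum_mult_xi:
  assumes "i < n"
  shows "(\<Sum>m<2 * n. h m * xi n i x m) = h i + Phi n x i * h (n + i)"
proof -
  have "(\<Sum>m<2 * n. h m * xi n i x m)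
      = (\<Sum>m<2 * n. (if m = i then h m else 0) + (if m = n + i then Phi n x i * h m else 0))"
    using assms by (intro sum.cong) (auto simp: xi_def)
  also have "\<dots> = h i + Phi n x i * h (n + i)"
    using assms by (simp add: sum.distrib)
  finally show ?thesis .
qed

lemma pd_xi:
  assumes "j < n"
  shows "pd (\<lambda>y. xi n j y k) x m = of_bool (k = n + j) * pd (\<lambda>y. Phi n y j) x m"
proof -
  consider "k = j" | "k = n + j" | "k \<noteq> j" "k \<noteq> n + j" by blast
  then show ?thesis
    using assms by cases (simp_all add: xi_def pd_def)
qed

definition xi_Phi :: "nat \<Rightarrow> (nat \<Rightarrow> real) \<Rightarrow> nat \<Rightarrow> nat \<Rightarrow> real" where
  "xi_Phi n x i j = pd (\<lambda>y. Phi n y j) x i + Phi n x i * pd (\<lambda>y. Phi n y j) x (n + i)"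

lemma lie_xi:
  assumes "i < n" "j < n"
  shows "lie n (xi n i) (xi n j) x k = of_bool (k = n + j) * xi_Phi n x i j - of_bool (k = n + i) * xi_Phi n x j i"
proof -
  have "lie n (xi n i) (xi n j) x k = (\<Sum>m<2 * n. pd (\<lambda>y. xi n j y k) x m * xi n i x m)
      - (\<Sum>m<2 * n. pd (\<lambda>y. xi n i y k) x m * xi n j x m)"
    unfolding lie_def by (simp add: sum_subtractf algebra_simps)
  then show ?thesis
    unfolding sum_mult_xi[OF assms(1)] sum_mult_xi[OF assms(2)] pd_xi[OF assms(1)] pd_xi[OF assms(2)]
      xi_Phi_def
    by (simp add: algebra_simps)
qed

lemma dperimeter_lie:
  assumes "i < n" "j < n"
  shows "(\<Sum>k<2 * n. dperimeter n x k * lie n (xi n i) (xi n j) x k)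
    = dperimeter n x (n + j) * xi_Phi n x i j - dperimeter n x (n + i) * xi_Phi n x j i"
proof -
  have "(\<Sum>k<2 * n. dperimeter n x k * lie n (xi n i) (xi n j) x k)
      = (\<Sum>k<2 * n. if k = n + j then dperimeter n x k * xi_Phi n x i j else 0)
        - (\<Sum>k<2 * n. if k = n + i then dperimeter n x k * xi_Phi n x j i else 0)"
    unfolding sum_subtractf[symmetric] lie_xi[OF assms] by (intro sum.cong) auto
  then show ?thesis
    using assms by simp
qed

section \<open>Tangency to the level sets of the perimeter\<close>

text \<open>In the two identities below, u, v, w are the half-angle tangents at the vertices
  i - 1, i, i + 1 and p0, ..., p3 the support numbers of the sides i - 1, ..., i + 2;
  they are dF(xi_i) = 0 and dF([xi_i, xi_(i+1)]) = 0 written out.\<close>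

lemma phi_tan_dperimeter_xi:
  fixes u v p0 p1 p2 :: real
  assumes "u + v \<noteq> 0"
  shows "(p0 + p1) * (1 + u\<^sup>2) / 2 - (p1 + p2) * (1 + v\<^sup>2) / 2 + phi_tan u v p2 p1 p0 * (v + u) = 0"
  using assms unfolding phi_tan_def by (simp add: divide_simps) algebra

lemma phi_tan_dperimeter_lie:
  fixes u v w p0 p1 p2 p3 :: real
  assumes "u + v \<noteq> 0" "v + w \<noteq> 0"
  shows "(w + v) * (- ((1 + v\<^sup>2) / 2) * phi_tan_du v w p3 p2 p1 + phi_tan u v p2 p1 p0 * phi_tan_dpp v w)
       - (v + u) * ((1 + v\<^sup>2) / 2 * phi_tan_dv u v p2 p1 p0 + phi_tan v w p3 p2 p1 * phi_tan_dpn u v) = 0"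
  using assms unfolding phi_tan_def phi_tan_du_def phi_tan_dv_def phi_tan_dpn_def phi_tan_dpp_def
  by (simp add: divide_simps) algebra

context
  fixes n :: nat and x :: "nat \<Rightarrow> real"
  assumes n3: "3 \<le> n" and xP: "x \<in> Pn n"
begin

lemma xi_Phi_nxt:
  assumes "i < n"
  shows "xi_Phi n x i (nxt n i) = - ((1 + (tan_half_angle n x i)\<^sup>2) / 2)
        * phi_tan_du (tan_half_angle n x i) (tan_half_angle n x (nxt n i))
            (pc n x (nxt n (nxt n i))) (pc n x (nxt n i)) (pc n x i)
      + Phi n x i * phi_tan_dpp (tan_half_angle n x i) (tan_half_angle n x (nxt n i))"
proof -
  have nl: "nxt n i < n" and nnl: "nxt n (nxt n i) < n"
    using n3 by (simp_all add: nxt_less)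
  have "prv n (nxt n i) = i" "nxt n i \<noteq> i" "nxt n (nxt n i) \<noteq> i"
    using assms nxt_neq_prv[OF n3 nl] by (simp_all add: prv_nxt nxt_neq n3)
  moreover have "i \<noteq> n + k" "n + i \<noteq> k" if "k < n" for k
    using assms that by auto
  ultimately show ?thesis
    unfolding xi_Phi_def pd_Phi[OF n3 xP nl] using nl nnl assms by simp
qed

lemma xi_nxt_Phi:
  assumes "i < n"
  shows "xi_Phi n x (nxt n i) i = (1 + (tan_half_angle n x i)\<^sup>2) / 2
        * phi_tan_dv (tan_half_angle n x (prv n i)) (tan_half_angle n x i)
            (pc n x (nxt n i)) (pc n x i) (pc n x (prv n i))
      + Phi n x (nxt n i) * phi_tan_dpn (tan_half_angle n x (prv n i)) (tan_half_angle n x i)"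
proof -
  have nl: "nxt n i < n" and pl: "prv n i < n"
    using n3 by (simp_all add: nxt_less prv_less)
  have "nxt n i \<noteq> i" "nxt n i \<noteq> prv n i"
    using assms n3 by (simp_all add: nxt_neq nxt_neq_prv)
  moreover have "nxt n i \<noteq> n + k" "n + nxt n i \<noteq> k" if "k < n" for k
    using nl that by auto
  ultimately show ?thesis
    unfolding xi_Phi_def pd_Phi[OF n3 xP assms] using nl pl assms by simp
qed

lemma xi_Phi_far:
  assumes "i < n" "j < n" "i \<noteq> j" "i \<noteq> nxt n j" "i \<noteq> prv n j"
  shows "xi_Phi n x i j = 0"
proof -
  have "i \<noteq> n + k" "n + i \<noteq> k" if "k < n" for k
    using assms that by auto
  then show ?thesis
    unfolding xi_Phi_def pd_Phi[OF n3 xP assms(2)] using assms nxt_less[of n j] prv_less[of n j] by simp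
qed

lemma dperimeter_xi:
  assumes "i < n"
  shows "(\<Sum>k<2 * n. dperimeter n x k * xi n i x k) = 0"
proof -
  have "0 < tan_half_angle n x (prv n i) + tan_half_angle n x i"
    using assms n3 by (intro add_pos_pos Pn_tan_half_angle_pos[OF xP] prv_less) simp_all
  then show ?thesis
    unfolding sum_mult_xi[OF assms] dperimeter_alpha[OF n3 assms] dperimeter_p[OF n3 assms]
      Phi_eq_phi_tan[OF n3 xP assms]
    by (intro phi_tan_dperimeter_xi) simp
qed

lemma dperimeter_lie_xi_nxt:
  assumes "i < n"
  shows "dperimeter n x (n + nxt n i) * xi_Phi n x i (nxt n i)
    - dperimeter n x (n + i) * xi_Phi n x (nxt n i) i = 0"
proof -
  have nl: "nxt n i < n" and pl: "prv n i < n"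
    using n3 by (simp_all add: nxt_less prv_less)
  have "0 < tan_half_angle n x (prv n i) + tan_half_angle n x i"
    "0 < tan_half_angle n x i + tan_half_angle n x (nxt n i)"
    using assms nl pl by (simp_all add: add_pos_pos Pn_tan_half_angle_pos[OF xP])
  then show ?thesis
    unfolding xi_Phi_nxt[OF assms] xi_nxt_Phi[OF assms] dperimeter_p[OF n3 nl] dperimeter_p[OF n3 assms]
      Phi_eq_phi_tan[OF n3 xP assms] Phi_eq_phi_tan[OF n3 xP nl] prv_nxt[OF assms]
    by (intro phi_tan_dperimeter_lie) simp_all
qed

lemma dperimeter_lie_xi:
  assumes "i < n" "j < n"
  shows "(\<Sum>k<2 * n. dperimeter n x k * lie n (xi n i) (xi n j) x k) = 0"
proof -
  consider "i = j" | "j = nxt n i" | "i = nxt n j" | "i \<noteq> j" "j \<noteq> nxt n i" "i \<noteq> nxt n j"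
    by blast
  then have "dperimeter n x (n + j) * xi_Phi n x i j - dperimeter n x (n + i) * xi_Phi n x j i = 0"
  proof cases
    case 2
    then show ?thesis using dperimeter_lie_xi_nxt[OF assms(1)] by simp
  next
    case 3
    then show ?thesis using dperimeter_lie_xi_nxt[OF assms(2)] by simp
  next
    case 4
    then have "i \<noteq> prv n j" "j \<noteq> prv n i"
      using assms by (auto simp: eq_nxt_iff_prv_eq)
    with 4 show ?thesis
      using xi_Phi_far[OF assms] xi_Phi_far[OF assms(2,1)] by simp
  qed simp
  then show ?thesis
    unfolding dperimeter_lie[OF assms] .
qed

end

section \<open>Spanning the tangent space\<close>

definition frame_comb ::
    "nat \<Rightarrow> (nat \<Rightarrow> real) \<Rightarrow> (nat \<Rightarrow> real) \<Rightarrow> (nat \<Rightarrow> nat \<Rightarrow> real) \<Rightarrow> nat \<Rightarrow> real" where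
  "frame_comb n x c d k = (\<Sum>i<n. c i * xi n i x k) + (\<Sum>i<n. \<Sum>j<n. d i j * lie n (xi n i) (xi n j) x k)"

lemma D_plus_bracket_eq: "D_plus_bracket n x = {v. \<exists>c d. \<forall>k<2 * n. v k = frame_comb n x c d k}"
  unfolding D_plus_bracket_def frame_comb_def ..

lemma tangent_Cn_eq:
  "3 \<le> n \<Longrightarrow> x \<in> Pn n \<Longrightarrow> tangent_Cn n x = {v. (\<Sum>k<2 * n. dperimeter n x k * v k) = 0}"
  unfolding tangent_Cn_def by (simp add: pd_perimeter)

lemma dperimeter_frame_comb:
  assumes "3 \<le> n" "x \<in> Pn n"
  shows "(\<Sum>k<2 * n. dperimeter n x k * frame_comb n x c d k) = 0"
proof -
  have "(\<Sum>k<2 * n. dperimeter n x k * frame_comb n x c d k)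
      = (\<Sum>i<n. c i * (\<Sum>k<2 * n. dperimeter n x k * xi n i x k))
        + (\<Sum>i<n. \<Sum>j<n. d i j * (\<Sum>k<2 * n. dperimeter n x k * lie n (xi n i) (xi n j) x k))"
    unfolding frame_comb_def distrib_left sum.distrib sum_distrib_left
    by (simp add: sum.swap[of _ "{..<2 * n}"] mult.left_commute)
  also have "\<dots> = 0"
    using dperimeter_xi[OF assms] dperimeter_lie_xi[OF assms] by simp
  finally show ?thesis .
qed

lemma D_plus_bracket_subset_tangent_Cn:
  assumes "3 \<le> n" "x \<in> Pn n"
  shows "D_plus_bracket n x \<subseteq> tangent_Cn n x"
proof
  fix v assume "v \<in> D_plus_bracket n x"
  then obtain c d where "\<forall>k<2 * n. v k = frame_comb n x c d k"
    unfolding D_plus_bracket_eq by blast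
  then have "(\<Sum>k<2 * n. dperimeter n x k * v k) = (\<Sum>k<2 * n. dperimeter n x k * frame_comb n x c d k)"
    by (intro sum.cong) auto
  then show "v \<in> tangent_Cn n x"
    unfolding tangent_Cn_eq[OF assms] using dperimeter_frame_comb[OF assms] by simp
qed

primrec chain_coeffs :: "(nat \<Rightarrow> real) \<Rightarrow> (nat \<Rightarrow> real) \<Rightarrow> (nat \<Rightarrow> real) \<Rightarrow> nat \<Rightarrow> real" where
  "chain_coeffs r a w 0 = - r 0 / w 0"
| "chain_coeffs r a w (Suc k) = (a k * chain_coeffs r a w k - r (Suc k)) / w (Suc k)"

lemma chain_coeffs_solves:
  assumes "w m \<noteq> 0"
  shows "(if 0 < m then chain_coeffs r a w (m - 1) * a (m - 1) else 0) - chain_coeffs r a w m * w m = r m"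
  using assms by (cases m) (simp_all add: field_simps)

lemma frame_comb_chain_alpha:
  assumes "k < n"
  shows "frame_comb n x c (\<lambda>i j. if j = Suc i then e i else 0) k = c k"
proof -
  have "(\<Sum>i<n. c i * xi n i x k) = (\<Sum>i<n. if i = k then c i else 0)"
    using assms by (intro sum.cong) (auto simp: xi_def)
  moreover have "lie n (xi n i) (xi n j) x k = 0" if "i < n" "j < n" for i j
    using assms by (simp add: lie_xi[OF that])
  ultimately show ?thesis
    using assms by (simp add: frame_comb_def)
qed

lemma frame_comb_chain_p:
  assumes "m < n"
  shows "frame_comb n x c (\<lambda>i j. if j = Suc i then e i else 0) (n + m) = c m * Phi n x m
      + (if 0 < m then e (m - 1) * xi_Phi n x (m - 1) m else 0)
      - (if Suc m < n then e m * xi_Phi n x (Suc m) m else 0)"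
proof -
  have "(\<Sum>i<n. c i * xi n i x (n + m)) = (\<Sum>i<n. if i = m then c i * Phi n x i else 0)"
    using assms by (intro sum.cong) (auto simp: xi_def)
  moreover have "(\<Sum>j<n. (if j = Suc i then e i else 0) * lie n (xi n i) (xi n j) x (n + m))
      = (if i = m - 1 then if 0 < m then e i * xi_Phi n x i (Suc i) else 0 else 0)
        - (if i = m then if Suc i < n then e i * xi_Phi n x (Suc i) i else 0 else 0)" if "i < n" for i
  proof -
    have "(\<Sum>j<n. (if j = Suc i then e i else 0) * lie n (xi n i) (xi n j) x (n + m))
        = (if Suc i < n then e i * lie n (xi n i) (xi n (Suc i)) x (n + m) else 0)"
      by (simp add: if_distrib[of "\<lambda>c. c * _"] cong: if_cong)
    then show ?thesis
      using that assms by (auto simp: lie_xi)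
  qed
  ultimately show ?thesis
    using assms by (simp add: frame_comb_def sum_subtractf)
qed

lemma sum_mult_eq_imp_eq_at:
  fixes g z v :: "nat \<Rightarrow> real"
  assumes "(\<Sum>k<N. g k * z k) = (\<Sum>k<N. g k * v k)" "c < N" "g c \<noteq> 0"
    and "\<And>k. k < N \<Longrightarrow> k \<noteq> c \<Longrightarrow> z k = v k"
  shows "z c = v c"
proof -
  have "(\<Sum>k<N. g k * z k) - (\<Sum>k<N. g k * v k) = (\<Sum>k<N. if k = c then g k * (z k - v k) else 0)"
    unfolding sum_subtractf[symmetric] using assms(4) by (intro sum.cong) (auto simp: algebra_simps)
  then have "g c * (z c - v c) = 0"
    using assms(1,2) by simp
  then show ?thesis
    using assms(3) by simp
qed

text \<open>The coefficients e_k of the brackets [xi_k, xi_(k+1)] are found by back substitution,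
  matching p_1, ..., p_(n-1) in turn; p_n is then forced since dF does not vanish on the
  p_n-direction.\<close>

lemma tangent_Cn_subset_D_plus_bracket:
  assumes n3: "3 \<le> n" and xP: "x \<in> Pn n" and chain: "\<And>k. Suc k < n \<Longrightarrow> xi_Phi n x (Suc k) k \<noteq> 0"
  shows "tangent_Cn n x \<subseteq> D_plus_bracket n x"
proof
  fix v assume "v \<in> tangent_Cn n x"
  then have v: "(\<Sum>k<2 * n. dperimeter n x k * v k) = 0"
    unfolding tangent_Cn_eq[OF n3 xP] by simp
  define r where "r m = v (n + m) - v m * Phi n x m" for m
  define e where "e = chain_coeffs r (\<lambda>k. xi_Phi n x k (Suc k)) (\<lambda>k. xi_Phi n x (Suc k) k)"
  define z where "z = frame_comb n x v (\<lambda>i j. if j = Suc i then e i else 0)"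
  have agree: "z k = v k" if "k < 2 * n" "k \<noteq> n + (n - 1)" for k
  proof (cases "k < n")
    case True
    then show ?thesis
      unfolding z_def by (rule frame_comb_chain_alpha)
  next
    case False
    define m where "m = k - n"
    have m: "k = n + m" "Suc m < n"
      using False that unfolding m_def by linarith+
    have "(if 0 < m then e (m - 1) * xi_Phi n x (m - 1) (Suc (m - 1)) else 0)
        - e m * xi_Phi n x (Suc m) m = r m"
      unfolding e_def by (rule chain_coeffs_solves) (rule chain[OF m(2)])
    then show ?thesis
      using frame_comb_chain_p[of m n x v e] m by (simp add: z_def r_def split: if_splits)
  qed
  have "z (n + (n - 1)) = v (n + (n - 1))"
  proof (rule sum_mult_eq_imp_eq_at)
    show "(\<Sum>k<2 * n. dperimeter n x k * z k) = (\<Sum>k<2 * n. dperimeter n x k * v k)"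
      unfolding v z_def by (rule dperimeter_frame_comb[OF n3 xP])
    have last: "n - 1 < n"
      using n3 by simp
    have "0 < tan_half_angle n x (n - 1) + tan_half_angle n x (prv n (n - 1))"
      using n3 by (intro add_pos_pos Pn_tan_half_angle_pos[OF xP] prv_less) simp_all
    then show "dperimeter n x (n + (n - 1)) \<noteq> 0"
      unfolding dperimeter_p[OF n3 last] by simp
  qed (use n3 agree in auto)
  with agree have "\<forall>k<2 * n. v k = z k"
    by metis
  then show "v \<in> D_plus_bracket n x"
    unfolding D_plus_bracket_eq z_def by blast
qed

lemma D_plus_bracket_eq_tangent_Cn:
  assumes "3 \<le> n" "x \<in> Pn n" "\<And>k. Suc k < n \<Longrightarrow> xi_Phi n x (Suc k) k \<noteq> 0"
  shows "D_plus_bracket n x = tangent_Cn n x"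
  using D_plus_bracket_subset_tangent_Cn[OF assms(1,2)] tangent_Cn_subset_D_plus_bracket[OF assms]
  by (rule antisym)

section \<open>Nondegeneracy near the regular polygons\<close>

definition xi_nxt_Phi_tan :: "real \<Rightarrow> real \<Rightarrow> real \<Rightarrow> real \<Rightarrow> real \<Rightarrow> real \<Rightarrow> real \<Rightarrow> real" where
  "xi_nxt_Phi_tan u v w p0 p1 p2 p3 =
    (1 + v\<^sup>2) / 2 * phi_tan_dv u v p2 p1 p0 + phi_tan v w p3 p2 p1 * phi_tan_dpn u v"

lemma xi_Suc_Phi_eq:
  assumes "3 \<le> n" "x \<in> Pn n" "Suc k < n"
  shows "xi_Phi n x (Suc k) k = xi_nxt_Phi_tan
    (tan_half_angle n x (prv n k)) (tan_half_angle n x k) (tan_half_angle n x (nxt n k))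
    (pc n x (prv n k)) (pc n x k) (pc n x (nxt n k)) (pc n x (nxt n (nxt n k)))"
proof -
  have k: "k < n" and nk: "nxt n k = Suc k"
    using assms(3) by (simp_all add: nxt_eq)
  show ?thesis
    using xi_nxt_Phi[OF assms(1,2) k] Phi_eq_phi_tan[OF assms(1,2,3)] prv_nxt[OF k]
    unfolding xi_nxt_Phi_tan_def nk by simp
qed

lemma dist_Pair_le: "dist (a, b) (c, d) \<le> dist a c + dist b d"
  unfolding dist_Pair_Pair using sqrt_sum_squares_le_sum_abs[of "dist a c" "dist b d"] by simp

lemma xi_nxt_Phi_tan_pos_near:
  assumes "0 < T"
  shows "\<exists>\<delta>>0. \<forall>u v w p0 p1 p2 p3. \<bar>u - T\<bar> < \<delta> \<and> \<bar>v - T\<bar> < \<delta> \<and> \<bar>w - T\<bar> < \<delta>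
    \<and> \<bar>p0 - 1\<bar> < \<delta> \<and> \<bar>p1 - 1\<bar> < \<delta> \<and> \<bar>p2 - 1\<bar> < \<delta> \<and> \<bar>p3 - 1\<bar> < \<delta>
    \<longrightarrow> 0 < xi_nxt_Phi_tan u v w p0 p1 p2 p3"
proof -
  define f :: "real \<times> real \<times> real \<times> real \<times> real \<times> real \<times> real \<Rightarrow> real" where
    "f z = xi_nxt_Phi_tan (fst z) (fst (snd z)) (fst (snd (snd z))) (fst (snd (snd (snd z))))
      (fst (snd (snd (snd (snd z))))) (fst (snd (snd (snd (snd (snd z))))))
      (snd (snd (snd (snd (snd (snd z))))))" for z
  define c where "c = (T, T, T, 1::real, 1::real, 1::real, 1::real)"
  have "isCont f c"
    unfolding f_def c_def xi_nxt_Phi_tan_def phi_tan_dv_def phi_tan_def phi_tan_dpn_def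
    using assms by (intro continuous_intros) simp_all
  moreover have "f c = (1 + T\<^sup>2) / 2"
    unfolding f_def c_def xi_nxt_Phi_tan_def phi_tan_dv_def phi_tan_def phi_tan_dpn_def
    using assms by (simp add: field_simps power2_eq_square)
  then have "0 < f c"
    by (metis add_pos_nonneg half_gt_zero zero_le_power2 zero_less_one)
  ultimately have "eventually (\<lambda>z. f z \<in> {0<..}) (nhds c)"
    by (intro isCont_eventually_nhds) auto
  then obtain d where d: "d > 0" "\<And>z. dist z c < d \<Longrightarrow> 0 < f z"
    unfolding eventually_nhds_metric by auto
  show ?thesis
  proof (intro exI[of _ "d / 7"] conjI allI impI)
    fix u v w p0 p1 p2 p3 :: real
    assume "\<bar>u - T\<bar> < d / 7 \<and> \<bar>v - T\<bar> < d / 7 \<and> \<bar>w - T\<bar> < d / 7 \<and> \<bar>p0 - 1\<bar> < d / 7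
      \<and> \<bar>p1 - 1\<bar> < d / 7 \<and> \<bar>p2 - 1\<bar> < d / 7 \<and> \<bar>p3 - 1\<bar> < d / 7"
    moreover have "dist (u, v, w, p0, p1, p2, p3) c
        \<le> dist u T + (dist v T + (dist w T + (dist p0 1 + (dist p1 1 + (dist p2 1 + dist p3 1)))))"
      unfolding c_def by (intro order_trans[OF dist_Pair_le] add_left_mono) (simp_all add: dist_Pair_le)
    ultimately have "dist (u, v, w, p0, p1, p2, p3) c < d"
      by (simp add: dist_real_def)
    then show "0 < xi_nxt_Phi_tan u v w p0 p1 p2 p3"
      using d(2) by (fastforce simp: f_def)
  qed (use d in simp)
qed

lemma xi_Suc_Phi_nonzero_near:
  assumes "3 \<le> n" "0 < T"
  shows "\<exists>\<delta>>0. \<forall>x\<in>Pn n. (\<forall>i<n. \<bar>tan_half_angle n x i - T\<bar> < \<delta> \<and> \<bar>pc n x i - 1\<bar> < \<delta>)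
    \<longrightarrow> (\<forall>k. Suc k < n \<longrightarrow> xi_Phi n x (Suc k) k \<noteq> 0)"
proof -
  obtain \<delta> where \<delta>: "\<delta> > 0" "\<forall>u v w p0 p1 p2 p3. \<bar>u - T\<bar> < \<delta> \<and> \<bar>v - T\<bar> < \<delta> \<and> \<bar>w - T\<bar> < \<delta>
    \<and> \<bar>p0 - 1\<bar> < \<delta> \<and> \<bar>p1 - 1\<bar> < \<delta> \<and> \<bar>p2 - 1\<bar> < \<delta> \<and> \<bar>p3 - 1\<bar> < \<delta>
    \<longrightarrow> 0 < xi_nxt_Phi_tan u v w p0 p1 p2 p3"
    using xi_nxt_Phi_tan_pos_near[OF assms(2)] by blast
  show ?thesis
  proof (intro exI[of _ \<delta>] conjI ballI impI allI)
    fix x k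
    assume x: "x \<in> Pn n" and near: "\<forall>i<n. \<bar>tan_half_angle n x i - T\<bar> < \<delta> \<and> \<bar>pc n x i - 1\<bar> < \<delta>"
      and k: "Suc k < n"
    have "prv n k < n" "k < n" "nxt n k < n" "nxt n (nxt n k) < n"
      using k by (simp_all add: prv_less nxt_less)
    then have "0 < xi_nxt_Phi_tan
      (tan_half_angle n x (prv n k)) (tan_half_angle n x k) (tan_half_angle n x (nxt n k))
      (pc n x (prv n k)) (pc n x k) (pc n x (nxt n k)) (pc n x (nxt n (nxt n k)))"
      using \<delta>(2) near by simp
    then show "xi_Phi n x (Suc k) k \<noteq> 0"
      unfolding xi_Suc_Phi_eq[OF assms(1) x k] by simp
  qed (rule \<delta>(1))
qed

lemma near_gamma0:
  assumes "3 \<le> n" "\<forall>k<2 * n. \<bar>x k - gamma0 n t k\<bar> < \<epsilon>" "i < n"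
  shows "\<bar>adiff n x i - 2 * pi / real n\<bar> < 2 * \<epsilon>" "\<bar>pc n x i - 1\<bar> < \<epsilon>"
proof -
  have "\<bar>x i - gamma0 n t i\<bar> < \<epsilon>" "\<bar>x (n + i) - gamma0 n t (n + i)\<bar> < \<epsilon>"
    using assms by simp_all
  then show "\<bar>pc n x i - 1\<bar> < \<epsilon>"
    by (simp add: pc_def gamma0_def)
  show "\<bar>adiff n x i - 2 * pi / real n\<bar> < 2 * \<epsilon>"
  proof (cases "i + 1 < n")
    case True
    then have "\<bar>x (i + 1) - gamma0 n t (i + 1)\<bar> < \<epsilon>"
      using assms(2) by simp
    with \<open>\<bar>x i - gamma0 n t i\<bar> < \<epsilon>\<close> True show ?thesis
      by (simp add: adiff_def gamma0_def abs_less_iff field_simps)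
  next
    case False
    then have i: "i = n - 1"
      using assms(3) by simp
    have "\<bar>x 0 - gamma0 n t 0\<bar> < \<epsilon>"
      using assms(1,2) by simp
    with \<open>\<bar>x i - gamma0 n t i\<bar> < \<epsilon>\<close> False i assms(1) show ?thesis
      by (simp add: adiff_def gamma0_def abs_less_iff field_simps)
  qed
qed

lemma tan_half_near:
  fixes \<theta> e :: real
  assumes "cos (\<theta> / 2) \<noteq> 0" "0 < e"
  shows "\<exists>d>0. \<forall>a. \<bar>a - \<theta>\<bar> < d \<longrightarrow> \<bar>tan (a / 2) - tan (\<theta> / 2)\<bar> < e"
proof -
  have "isCont (\<lambda>a. tan (a / 2)) \<theta>"
    using assms(1) by (intro continuous_intros) simp_all
  then show ?thesis
    using assms(2) unfolding continuous_at_eps_delta dist_real_def by simp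
qed

theorem mainTheorem9:
  fixes n :: nat
  assumes "n \<ge> 3"
  shows "\<exists>\<epsilon>>0. \<forall>x \<in> Cn n.
           (\<exists>t\<in>{0..1}. \<forall>k<2 * n. \<bar>x k - gamma0 n t k\<bar> < \<epsilon>)
             \<longrightarrow> D_plus_bracket n x = tangent_Cn n x"
proof -
  have angle: "0 < pi / real n" "pi / real n < pi / 2" and half: "2 * pi / real n / 2 = pi / real n"
    using assms by (simp_all add: field_simps)
  obtain \<delta> where \<delta>: "\<delta> > 0" "\<forall>x\<in>Pn n. (\<forall>i<n. \<bar>tan_half_angle n x i - tan (pi / real n)\<bar> < \<delta>
      \<and> \<bar>pc n x i - 1\<bar> < \<delta>) \<longrightarrow> (\<forall>k. Suc k < n \<longrightarrow> xi_Phi n x (Suc k) k \<noteq> 0)"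
    using xi_Suc_Phi_nonzero_near[OF assms tan_gt_zero[OF angle]] by blast
  have "0 < cos (pi / real n)"
    using angle by (intro cos_gt_zero_pi) linarith+
  then have "cos (2 * pi / real n / 2) \<noteq> 0"
    unfolding half by simp
  from tan_half_near[OF this \<delta>(1)]
  obtain d where d: "d > 0" "\<forall>a. \<bar>a - 2 * pi / real n\<bar> < d \<longrightarrow> \<bar>tan (a / 2) - tan (pi / real n)\<bar> < \<delta>"
    unfolding half by blast
  show ?thesis
  proof (intro exI[of _ "min (d / 2) \<delta>"] conjI ballI impI)
    fix x assume "x \<in> Cn n" and "\<exists>t\<in>{0..1}. \<forall>k<2 * n. \<bar>x k - gamma0 n t k\<bar> < min (d / 2) \<delta>"
    then obtain t where xP: "x \<in> Pn n" and near: "\<forall>k<2 * n. \<bar>x k - gamma0 n t k\<bar> < min (d / 2) \<delta>"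
      by (auto simp: Cn_def)
    have "\<bar>tan_half_angle n x i - tan (pi / real n)\<bar> < \<delta> \<and> \<bar>pc n x i - 1\<bar> < \<delta>" if "i < n" for i
      using near_gamma0[OF assms near that] d(2) unfolding tan_half_angle_def by auto
    then show "D_plus_bracket n x = tangent_Cn n x"
      using \<delta>(2) xP by (intro D_plus_bracket_eq_tangent_Cn[OF assms xP]) blast
  qed (use d \<delta> in simp)
qed

end
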